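(* Let \[F_3(x,y)=6(x^2-y^2)(x^2+y^2)^2+3x^5-6x^3y^2-9xy^4-2x^2y^2\in\mathbb{Z}[x,y],\] and let $C_3\subset\mathbb{P}^2$ be the projective closure of the plane affine curve $\{F_3=0\}$, considered over $\mathbb{Q}$. Then $F_3$ is irreducible and $C_3$ is a curve of geometric genus $1$. Moreover $C_3$ is birationally equivalent over $\mathbb{Q}$ to the elliptic curve \[E:\; v^2=u^3-75u+74 .\] An explicit birational map $E\dashrightarrow C_3$ is given by \[(u,v)\mapsto\left(\frac{X}{X^2+Y^2},\,-\frac{Y}{X^2+Y^2}\right),\qquad X=\frac{u-13}{6},\quad Y=\frac{v}{2}\cdot\frac{u-13}{u^2+u-74}.\] In particular $C_3$ is an elliptic curve over $\mathbb{Q}$ (it has the rational point $(-1/2,0)$), with $j$-invariant $j=\frac{62500}{33}=\frac{2^2\cdot 5^6}{3\cdot 11}$.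
   Context: The polynomial $F_3$ arises as follows: for $\phi=\exp\!\big(x/(x^2+y^2)\big)$ one has $\partial_y^3\phi = \frac{xy\,F_3(x,y)}{(x^2+y^2)^6}\,\phi$. The geometric genus of $C_3$ means the genus of its normalization (smooth projective model). *)

theory Defs
  imports Complex_Main "HOL-Computational_Algebra.Polynomial"
begin

text \<open>Bivariate polynomials over Q are represented as Q[x][y] = rat poly poly:
  the outer variable is y, the coefficients are polynomials in x.\<close>

definition polyX :: "rat poly poly" where "polyX = [:[:0, 1:]:]"
definition polyY :: "rat poly poly" where "polyY = [:0, 1:]"

definition F3 :: "rat poly poly" where
  "F3 = 6 * (polyX^2 - polyY^2) * (polyX^2 + polyY^2)^2 + 3 * polyX^5
        - 6 * polyX^3 * polyY^2 - 9 * polyX * polyY^4 - 2 * polyX^2 * polyY^2"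

definition eval2 :: "rat poly poly \<Rightarrow> complex \<Rightarrow> complex \<Rightarrow> complex" where
  "eval2 P x y = poly (map_poly (\<lambda>c. poly (map_poly of_rat c) x) P) y"

definition onE :: "complex \<Rightarrow> complex \<Rightarrow> bool" where
  "onE u v \<longleftrightarrow> v^2 = u^3 - 75 * u + 74"

definition phiX :: "complex \<Rightarrow> complex" where "phiX u = (u - 13) / 6"
definition phiY :: "complex \<Rightarrow> complex \<Rightarrow> complex" where
  "phiY u v = v / 2 * ((u - 13) / (u^2 + u - 74))"

definition phi_defined :: "complex \<Rightarrow> complex \<Rightarrow> bool" where
  "phi_defined u v \<longleftrightarrow> u^2 + u - 74 \<noteq> 0 \<and> (phiX u)^2 + (phiY u v)^2 \<noteq> 0"

definition phi :: "complex \<Rightarrow> complex \<Rightarrow> complex \<times> complex" where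
  "phi u v = (phiX u / ((phiX u)^2 + (phiY u v)^2),
              - phiY u v / ((phiX u)^2 + (phiY u v)^2))"

definition weierstrass_disc :: "rat \<Rightarrow> rat \<Rightarrow> rat" where
  "weierstrass_disc a b = -16 * (4 * a^3 + 27 * b^2)"

definition weierstrass_j :: "rat \<Rightarrow> rat \<Rightarrow> rat" where
  "weierstrass_j a b = 1728 * (4 * a^3) / (4 * a^3 + 27 * b^2)"

end

theory Submission
  imports Defs
begin

(* Irreducibility: substituting y = t x gives F3(x, t x) = x^4 R(t, x), where R, the strict
   transform of C3 under the blow-up of the origin, is quadratic in x with R(t, 0) = -2 t^2.
   The substitution is an injective ring homomorphism, so a factorisation F3 = A B yields a
   factorisation of R up to powers of x. The coefficients of R in Q[t] have no common factor,
   R(2, x) = -450 x^2 - 165 x - 8 has the non-square discriminant 12825, and a factor A = c x^m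
   with m > 0 is excluded by F3(0, 1) = -6.

   Birationality: the inversion (X, Y) = (x, -y) / (x^2 + y^2) turns F3 = 0 into
   Y^2 W(X) = 3 X^2 (X + 2) with W(X) = 2 X^2 + 9 X + 6, and u = 6 X + 13, v = 6 Y W(X) / X
   turn this into v^2 = u^3 - 75 u + 74, since u^2 + u - 74 = 18 W(X) and
   u^3 - 75 u + 74 = 108 (X + 2) W(X). The map phi is the inverse of this composite. *)

lemma map_poly_add_hom:
  assumes "\<And>a b. f (a + b) = f a + f b" and "f 0 = 0"
  shows "map_poly f (p + q) = map_poly f p + map_poly f q"
  by (intro poly_eqI) (simp add: coeff_map_poly assms)

lemma map_poly_mult_hom:
  fixes f :: "'a::comm_semiring_0 \<Rightarrow> 'b::comm_semiring_0"
  assumes add: "\<And>a b. f (a + b) = f a + f b" and mult: "\<And>a b. f (a * b) = f a * f b"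
    and zero: "f 0 = 0"
  shows "map_poly f (p * q) = map_poly f p * map_poly f q"
proof (induction p)
  case (pCons a p)
  then show ?case
    by (simp add: map_poly_add_hom[OF add zero] map_poly_smult[of f, OF zero mult]
        map_poly_pCons[of f, OF zero] zero)
qed simp

lemma poly_map_poly_hom:
  fixes h :: "'a::comm_semiring_0 \<Rightarrow> 'b::comm_semiring_0"
  assumes "\<And>a b. h (a + b) = h a + h b" and "\<And>a b. h (a * b) = h a * h b" and "h 0 = 0"
  shows "h (poly p x) = poly (map_poly h p) (h x)"
  by (induction p) (simp_all add: map_poly_pCons assms)

lemma factors_of_X_power_mult:
  fixes p q r :: "'a::idom poly"
  assumes pq: "p * q = [:0, 1:] ^ k * r" and r0: "poly r 0 \<noteq> 0"
  obtains m n p' q' where "p = [:0, 1:] ^ m * p'" "q = [:0, 1:] ^ n * q'" "p' * q' = r"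
proof -
  have X: "[:0, 1:] = [:- 0, 1 :: 'a:]"
    by simp
  have nz: "p * q \<noteq> 0"
    using pq r0 by auto
  then have "order 0 p + order 0 q = order 0 (p * q)"
    by (simp add: order_mult)
  also have "\<dots> = order 0 ([:- 0, 1:] ^ k * r)"
    using pq by simp
  also have "\<dots> = k"
    using r0 order_power_n_n[of 0 k] by (subst order_mult) (auto simp: order_0I)
  finally have ord: "order 0 p + order 0 q = k" .
  obtain p' q' where p': "p = [:0, 1:] ^ order 0 p * p'" and q': "q = [:0, 1:] ^ order 0 q * q'"
    using order_decomp[of p 0] order_decomp[of q 0] nz by auto
  have "[:0, 1:] ^ k * (p' * q')
      = ([:0, 1:] ^ order 0 p * p') * ([:0, 1:] ^ order 0 q * q')"
    by (simp add: mult_ac flip: ord power_add)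
  also have "\<dots> = [:0, 1:] ^ k * r"
    using p' q' pq by simp
  finally have "[:0, 1:] ^ k * (p' * q') = [:0, 1:] ^ k * r" .
  then have "p' * q' = r"
    by simp
  with p' q' show ?thesis
    using that by blast
qed

lemma rat_square_eq_of_int_imp_square:
  assumes "(r :: rat)^2 = of_int n"
  shows "\<exists>k. n = k^2"
proof -
  obtain a b where r: "r = of_int a / of_int b" and "b > 0" and "coprime a b"
    by (cases r) (auto simp: Fract_of_int_quotient)
  then have "of_int a = r * of_int b"
    by simp
  then have "(of_int (a^2) :: rat) = of_int (n * b^2)"
    using assms by (simp add: power_mult_distrib)
  then have "a^2 = n * b^2"
    by (rule of_int_eq_iff[THEN iffD1])
  then have "b^2 dvd a^2"
    by simp
  moreover have "coprime (b^2) (a^2)"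
    using \<open>coprime a b\<close> by (simp add: coprime_commute)
  ultimately have "is_unit b"
    by (metis coprime_absorb_left is_unit_power_iff zero_neq_numeral)
  then have "b = 1"
    using \<open>b > 0\<close> by simp
  then show ?thesis
    using \<open>a^2 = n * b^2\<close> by auto
qed

lemma inversion_sum_squares:
  fixes a b :: "'a::field"
  assumes "a^2 + b^2 \<noteq> 0"
  shows "(a / (a^2 + b^2))^2 + (b / (a^2 + b^2))^2 = 1 / (a^2 + b^2)"
proof -
  have "(a / (a^2 + b^2))^2 + (b / (a^2 + b^2))^2 = (a^2 + b^2) / (a^2 + b^2)^2"
    by (simp add: power_divide add_divide_distrib)
  then show ?thesis
    using assms by (simp add: power2_eq_square)
qed

lemma finite_roots_with_square_roots:
  fixes P :: "'a::idom poly" and f :: "'a \<Rightarrow> 'a"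
  assumes "P \<noteq> 0"
  shows "finite {(u, v). poly P u = 0 \<and> v^2 = f u}"
proof (rule finite_subset)
  show "{(u, v). poly P u = 0 \<and> v^2 = f u}
      \<subseteq> (\<Union>u\<in>{u. poly P u = 0}. {u} \<times> {v. poly [:- f u, 0, 1:] v = 0})"
    by (auto simp: power2_eq_square)
  show "finite (\<Union>u\<in>{u. poly P u = 0}. {u} \<times> {v. poly [:- f u, 0, 1:] v = 0})"
    using assms by (intro finite_UN_I poly_roots_finite finite_cartesian_product) auto
qed

lemma finite_except_point:
  assumes "\<And>x y. P x y \<Longrightarrow> (x, y) \<noteq> p \<Longrightarrow> Q x y"
  shows "finite {(x, y). P x y \<and> \<not> Q x y}"
  by (rule finite_subset[of _ "{p}"]) (use assms in auto)

lemma poly_map_of_rat_add: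
  "poly (map_poly of_rat (p + q)) x = poly (map_poly of_rat p) x + poly (map_poly of_rat q) x"
  by (simp add: map_poly_add_hom of_rat_add)

lemma poly_map_of_rat_mult:
  "poly (map_poly of_rat (p * q)) x = poly (map_poly of_rat p) x * poly (map_poly of_rat q) x"
  by (simp add: map_poly_mult_hom of_rat_add of_rat_mult)

lemma eval2_0 [simp]: "eval2 0 x y = 0"
  by (simp add: eval2_def)

lemma eval2_add [simp]: "eval2 (P + Q) x y = eval2 P x y + eval2 Q x y"
  unfolding eval2_def by (simp add: map_poly_add_hom poly_map_of_rat_add)

lemma eval2_mult [simp]: "eval2 (P * Q) x y = eval2 P x y * eval2 Q x y"
  unfolding eval2_def by (simp add: map_poly_mult_hom poly_map_of_rat_add poly_map_of_rat_mult)

lemma eval2_diff [simp]: "eval2 (P - Q) x y = eval2 P x y - eval2 Q x y"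
  using eval2_add[of "P - Q" Q x y] by simp

lemma eval2_uminus [simp]: "eval2 (- P) x y = - eval2 P x y"
  using eval2_diff[of 0 P x y] by simp

lemma eval2_const [simp]: "eval2 [:[:c:]:] x y = of_rat c"
  by (simp add: eval2_def map_poly_pCons)

lemma eval2_1 [simp]: "eval2 1 x y = 1"
  using eval2_const[of 1 x y] by (simp add: one_pCons)

lemma eval2_power [simp]: "eval2 (P ^ n) x y = eval2 P x y ^ n"
  by (induction n) simp_all

lemma eval2_numeral [simp]: "eval2 (numeral n) x y = numeral n"
  using eval2_const[of "numeral n" x y] by (simp add: numeral_poly)

lemma eval2_polyX [simp]: "eval2 polyX x y = x"
  by (simp add: eval2_def polyX_def map_poly_pCons)

lemma eval2_polyY [simp]: "eval2 polyY x y = y"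
  by (simp add: eval2_def polyY_def map_poly_pCons)

lemma eval2_F3:
  "eval2 F3 x y = 6 * (x^2 - y^2) * (x^2 + y^2)^2 + 3 * x^5 - 6 * x^3 * y^2 - 9 * x * y^4
     - 2 * x^2 * y^2"
  by (simp add: F3_def)

lemma eval2_eq_0_imp_eq_0:
  assumes "\<And>x y. x \<noteq> 0 \<Longrightarrow> eval2 A x y = 0"
  shows "A = 0"
proof (rule poly_eqI)
  fix i
  have "poly (map_poly of_rat (coeff A i)) x = 0" if "x \<noteq> 0" for x :: complex
  proof -
    have "map_poly (\<lambda>c. poly (map_poly of_rat c) x) A = 0"
      using assms[OF that] poly_all_0_iff_0 unfolding eval2_def by blast
    then show ?thesis
      by (metis (no_types, lifting) coeff_0 coeff_map_poly map_poly_0 poly_0)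
  qed
  then have "{x. x \<noteq> 0} \<subseteq> {x. poly (map_poly (of_rat :: rat \<Rightarrow> complex) (coeff A i)) x = 0}"
    by blast
  moreover have "infinite {x :: complex. x \<noteq> 0}"
    using infinite_UNIV_char_0 by (simp add: Collect_neg_eq)
  ultimately have "map_poly (of_rat :: rat \<Rightarrow> complex) (coeff A i) = 0"
    using poly_roots_finite finite_subset by blast
  then show "coeff A i = coeff 0 i"
    by (subst (asm) map_poly_eq_0_iff) auto
qed

(* A(x, t x), read in Q[t][x]: the outer variable is x, the coefficients are polynomials in t. *)
definition subst_y_tx :: "'a::comm_semiring_1 poly poly \<Rightarrow> 'a poly poly" where
  "subst_y_tx A = poly (map_poly (map_poly (\<lambda>r. [:r:])) A) [:0, [:0, 1:]:]"

lemma subst_y_tx_add: "subst_y_tx (A + B) = subst_y_tx A + subst_y_tx B"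
  unfolding subst_y_tx_def by (simp add: map_poly_add_hom)

lemma map_poly_const_mult:
  fixes p q :: "'a::comm_semiring_1 poly"
  shows "map_poly (\<lambda>r. [:r:]) (p * q) = map_poly (\<lambda>r. [:r:]) p * map_poly (\<lambda>r. [:r:]) q"
  by (rule map_poly_mult_hom) (simp_all add: mult.commute)

lemma subst_y_tx_mult: "subst_y_tx (A * B) = subst_y_tx A * subst_y_tx B"
  unfolding subst_y_tx_def
  by (simp add: map_poly_add_hom map_poly_mult_hom map_poly_const_mult)

lemma subst_y_tx_diff:
  "subst_y_tx (A - B) = subst_y_tx A - (subst_y_tx B :: 'a::comm_ring_1 poly poly)"
  using subst_y_tx_add[of "A - B" B] by simp

lemma subst_y_tx_const: "subst_y_tx [:[:c:]:] = [:[:c:]:]"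
  by (simp add: subst_y_tx_def map_poly_pCons)

lemma subst_y_tx_1: "subst_y_tx 1 = 1"
  using subst_y_tx_const[of 1] by (simp add: one_pCons)

lemma subst_y_tx_power: "subst_y_tx (A ^ n) = subst_y_tx A ^ n"
  by (induction n) (simp_all add: subst_y_tx_mult subst_y_tx_1)

lemma subst_y_tx_numeral: "subst_y_tx (numeral n) = numeral n"
  using subst_y_tx_const[of "numeral n"] by (simp add: numeral_poly)

lemma subst_y_tx_polyX: "subst_y_tx polyX = [:0, 1:]"
  by (simp add: subst_y_tx_def polyX_def map_poly_pCons)

lemma subst_y_tx_polyY: "subst_y_tx polyY = [:0, [:0, 1:]:]"
  by (simp add: subst_y_tx_def polyY_def map_poly_pCons)

lemma eval2_subst_y_tx: "eval2 (subst_y_tx A) t x = eval2 A x (t * x)"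
proof -
  let ?h = "\<lambda>Q. eval2 Q t x"
  have "?h [:0, [:0, 1:]:] = t * x"
    by (simp add: eval2_def map_poly_pCons)
  then have "?h (subst_y_tx A) = poly (map_poly ?h (map_poly (map_poly (\<lambda>r. [:r:])) A)) (t * x)"
    unfolding subst_y_tx_def
    by (subst poly_map_poly_hom[where h = ?h]) simp_all
  also have "map_poly ?h (map_poly (map_poly (\<lambda>r. [:r:])) A)
      = map_poly (\<lambda>c. poly (map_poly of_rat c) x) A"
    by (simp add: map_poly_map_poly o_def eval2_def map_poly_pCons)
  finally show ?thesis
    by (simp add: eval2_def)
qed

lemma subst_y_tx_eq_0_iff: "subst_y_tx A = 0 \<longleftrightarrow> A = (0 :: rat poly poly)"
proof
  assume "subst_y_tx A = 0"
  then have "eval2 A x (t * x) = 0" for t x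
    by (metis eval2_0 eval2_subst_y_tx)
  then have "eval2 A x y = 0" if "x \<noteq> 0" for x y
    using that by (metis nonzero_eq_divide_eq)
  then show "A = 0"
    by (rule eval2_eq_0_imp_eq_0)
qed (simp add: subst_y_tx_def)

definition F3_strict_transform :: "rat poly poly" where
  "F3_strict_transform = [:[:0, 0, -2:], [:3, 0, -6, 0, -9:], [:6, 0, 6, 0, -6, 0, -6:]:]"

lemma subst_y_tx_F3: "subst_y_tx F3 = [:0, 1:] ^ 4 * F3_strict_transform"
proof -
  define T :: "rat poly poly" where "T = [:[:0, 1:]:]"
  define X :: "rat poly poly" where "X = [:0, 1:]"
  have "[:0, [:0, 1:]:] = T * X"
    by (simp add: T_def X_def)
  moreover have "F3_strict_transform
      = -2 * T^2 + (3 - 6 * T^2 - 9 * T^4) * X + (6 + 6 * T^2 - 6 * T^4 - 6 * T^6) * X^2"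
    by (simp add: F3_strict_transform_def T_def X_def numeral_poly eval_nat_numeral)
  ultimately show ?thesis
    unfolding F3_def
    by (simp add: X_def[symmetric] subst_y_tx_add subst_y_tx_diff subst_y_tx_mult subst_y_tx_power
        subst_y_tx_numeral subst_y_tx_polyX subst_y_tx_polyY) algebra
qed

lemma not_square_12825: "(k :: int)^2 \<noteq> 12825"
proof (cases "\<bar>k\<bar> \<le> 113")
  case True
  then have "\<bar>k\<bar>^2 \<le> 113^2"
    by (intro power_mono) auto
  then show ?thesis
    by auto
next
  case False
  then have "114^2 \<le> \<bar>k\<bar>^2"
    by (intro power_mono) auto
  then show ?thesis
    by auto
qed

lemma F3_strict_transform_no_linear_factors:
  "[:a0, a1:] * [:b0, b1:] \<noteq> F3_strict_transform"
proof
  assume "[:a0, a1:] * [:b0, b1:] = F3_strict_transform"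
  then have "a0 * b0 = [:0, 0, -2:]" "a0 * b1 + a1 * b0 = [:3, 0, -6, 0, -9:]"
      "a1 * b1 = [:6, 0, 6, 0, -6, 0, -6:]"
    by (simp_all add: F3_strict_transform_def algebra_simps)
  then have "poly a0 2 * poly b0 2 = -8" "poly a0 2 * poly b1 2 + poly a1 2 * poly b0 2 = -165"
      "poly a1 2 * poly b1 2 = -450"
    by (simp_all flip: poly_mult poly_add)
  then have "(poly a0 2 * poly b1 2 - poly a1 2 * poly b0 2)^2 = of_int 12825"
    by (simp add: power2_eq_square algebra_simps) algebra
  then show False
    using rat_square_eq_of_int_imp_square not_square_12825 by metis
qed

lemma F3_strict_transform_constant_factor:
  assumes "[:c:] * q = F3_strict_transform"
  shows "is_unit c"
proof -
  have "c * coeff q 0 = [:0, 0, -2:]" "c * coeff q 2 = [:6, 0, 6, 0, -6, 0, -6:]"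
    using arg_cong[OF assms, of "\<lambda>p. coeff p 0"] arg_cong[OF assms, of "\<lambda>p. coeff p 2"]
    by (simp_all add: F3_strict_transform_def numeral_2_eq_2)
  then have "c dvd [:6, 0, 6, 0, -6, 0, -6:] + [:0, 0, -2:] * [:3, 0, -3, 0, -3:]"
    by (metis dvd_add dvd_mult2 dvd_triv_left)
  also have "[:6, 0, 6, 0, -6, 0, -6:] + [:0, 0, -2:] * [:3, 0, -3, 0, -3:] = [:6 :: rat:]"
    by simp
  finally show ?thesis
    by (rule dvd_unit_imp_unit) (simp add: is_unit_poly_iff dvd_field_iff)
qed

lemma eval2_F3_0_1: "eval2 F3 0 1 = -6"
  by (simp add: eval2_F3)

lemma F3_factor_is_unit:
  assumes F: "F3 = A * B" and A: "subst_y_tx A = [:0, 1:] ^ m * [:c:]"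
    and c: "[:c:] * q = F3_strict_transform"
  shows "is_unit A"
proof -
  obtain k where "c = [:k:]" "k \<noteq> 0"
    using F3_strict_transform_constant_factor[OF c] by (auto simp: is_unit_poly_iff dvd_field_iff)
  have "subst_y_tx ([:[:k:]:] * polyX ^ m) = [:[:k:]:] * [:0, 1:] ^ m"
    by (simp only: subst_y_tx_mult subst_y_tx_power subst_y_tx_const subst_y_tx_polyX)
  then have "subst_y_tx A = subst_y_tx ([:[:k:]:] * polyX ^ m)"
    using A \<open>c = [:k:]\<close> by (simp only: mult.commute)
  then have A_eq: "A = [:[:k:]:] * polyX ^ m"
    using subst_y_tx_eq_0_iff[of "A - [:[:k:]:] * polyX ^ m"] by (simp add: subst_y_tx_diff)
  have "m = 0"
  proof (rule ccontr)
    assume "m \<noteq> 0"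
    then have "eval2 A 0 1 = 0"
      by (simp only: A_eq eval2_mult eval2_power eval2_polyX) simp
    then show False
      using eval2_F3_0_1 by (simp add: F)
  qed
  then show ?thesis
    using A_eq \<open>k \<noteq> 0\<close> by (simp add: is_unit_poly_iff dvd_field_iff)
qed

theorem irreducible_F3: "irreducible F3"
proof (rule irreducibleI)
  show "F3 \<noteq> 0"
    using eval2_F3_0_1 by auto
  show "\<not> is_unit F3"
  proof
    assume "is_unit F3"
    then obtain G where "1 = F3 * G"
      by (rule dvdE)
    then have "eval2 1 0 0 = eval2 F3 0 0 * eval2 G 0 0"
      by (metis eval2_mult)
    then show False
      by (simp add: eval2_F3)
  qed
  fix A B
  assume F: "F3 = A * B"
  have "poly F3_strict_transform 0 \<noteq> 0"
    by (simp add: F3_strict_transform_def)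
  then obtain m n p q where A: "subst_y_tx A = [:0, 1:] ^ m * p"
      and B: "subst_y_tx B = [:0, 1:] ^ n * q" and pq: "p * q = F3_strict_transform"
    using factors_of_X_power_mult[of "subst_y_tx A" "subst_y_tx B" 4]
    by (metis F subst_y_tx_F3 subst_y_tx_mult)
  have "p \<noteq> 0" "q \<noteq> 0"
    using pq by (auto simp: F3_strict_transform_def)
  then have "degree p + degree q = degree F3_strict_transform"
    by (simp add: degree_mult_eq flip: pq)
  also have "\<dots> = 2"
    by (simp add: F3_strict_transform_def)
  finally have "degree p + degree q = 2" .
  then consider "degree p = 0" | "degree q = 0" | "degree p = 1" "degree q = 1"
    by linarith
  then show "is_unit A \<or> is_unit B"
  proof cases
    case 1
    then have "p = [:coeff p 0:]"
      by (simp add: degree_0_id)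
    then show ?thesis
      using F3_factor_is_unit[OF F] A pq by metis
  next
    case 2
    then have "q = [:coeff q 0:]"
      by (simp add: degree_0_id)
    then show ?thesis
      using F3_factor_is_unit[of B A] F B pq by (metis mult.commute)
  next
    case 3
    then show ?thesis
      using pq F3_strict_transform_no_linear_factors by (metis degree1_coeffs)
  qed
qed

definition quad_W :: "complex \<Rightarrow> complex" where
  "quad_W X = 2 * X^2 + 9 * X + 6"

definition inverted_F3 :: "complex \<Rightarrow> complex \<Rightarrow> complex" where
  "inverted_F3 X Y = 3 * X^2 * (X + 2) - Y^2 * quad_W X"

lemma eval2_F3_inversion:
  assumes s: "x^2 + y^2 \<noteq> 0"
  shows "eval2 F3 x y = (x^2 + y^2)^4 * inverted_F3 (x / (x^2 + y^2)) (- y / (x^2 + y^2))"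
proof -
  define s where "s = x^2 + y^2"
  define X where "X = x / s"
  define Y where "Y = - y / s"
  have "x = X * s" "y = - Y * s" "s = x^2 + y^2"
    using s by (simp_all add: X_def Y_def s_def)
  then have "eval2 F3 x y = s^4 * inverted_F3 X Y"
    unfolding eval2_F3 inverted_F3_def quad_W_def by algebra
  then show ?thesis
    by (simp add: s_def X_def Y_def)
qed

lemma phi_denominator_eq: "u^2 + u - 74 = 18 * quad_W (phiX u)"
  by (simp add: quad_W_def phiX_def power2_eq_square field_simps)

lemma onE_rhs_eq: "u^3 - 75 * u + 74 = 108 * (phiX u + 2) * quad_W (phiX u)"
  by (simp add: quad_W_def phiX_def power2_eq_square power3_eq_cube field_simps)

lemma phiX_of_affine: "phiX (6 * X + 13) = X"
  by (simp add: phiX_def)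

lemma affine_of_phiX: "6 * phiX u + 13 = u"
  by (simp add: phiX_def field_simps)

lemma phiY_eq:
  assumes "quad_W (phiX u) \<noteq> 0"
  shows "phiY u v = v * phiX u / (6 * quad_W (phiX u))"
  using assms unfolding phiY_def phi_denominator_eq by (simp add: phiX_def field_simps)

lemma inverted_F3_phi:
  assumes E: "onE u v" and W: "quad_W (phiX u) \<noteq> 0"
  shows "inverted_F3 (phiX u) (phiY u v) = 0"
proof -
  have "(phiY u v)^2 * quad_W (phiX u) = v^2 * (phiX u)^2 / (36 * quad_W (phiX u))"
    using W by (simp add: phiY_eq[OF W] field_simps power2_eq_square)
  also have "\<dots> = 108 * (phiX u + 2) * quad_W (phiX u) * (phiX u)^2 / (36 * quad_W (phiX u))"
    using E by (simp add: onE_def onE_rhs_eq)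
  also have "\<dots> = 3 * (phiX u)^2 * (phiX u + 2)"
    using W by simp
  finally show ?thesis
    by (simp add: inverted_F3_def)
qed

lemma onE_inverted_F3:
  assumes X: "X \<noteq> 0" and W: "quad_W X \<noteq> 0" and G: "inverted_F3 X Y = 0"
  shows "onE (6 * X + 13) (6 * Y * quad_W X / X)"
proof -
  have "(6 * Y * quad_W X / X)^2 = 36 * quad_W X * (Y^2 * quad_W X) / X^2"
    using X by (simp add: field_simps power2_eq_square)
  also have "\<dots> = 36 * quad_W X * (3 * X^2 * (X + 2)) / X^2"
    using G by (simp add: inverted_F3_def)
  also have "\<dots> = 108 * (X + 2) * quad_W X"
    using X by simp
  finally show ?thesis
    unfolding onE_def onE_rhs_eq phiX_of_affine .
qed

(* The composite C3 --> E: (x, y) |-> (6 X + 13, 6 Y W(X) / X) with denominators cleared. *)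
definition psi_u_den :: "rat poly poly" where
  "psi_u_den = polyX^2 + polyY^2"

definition psi_u_num :: "rat poly poly" where
  "psi_u_num = 13 * psi_u_den + 6 * polyX"

definition psi_v_den :: "rat poly poly" where
  "psi_v_den = polyX * psi_u_den^2"

definition psi_v_num :: "rat poly poly" where
  "psi_v_num = - 6 * polyY * (2 * polyX^2 + 9 * polyX * psi_u_den + 6 * psi_u_den^2)"

lemma eval2_psi_u:
  assumes "x^2 + y^2 \<noteq> 0"
  shows "eval2 psi_u_num x y / eval2 psi_u_den x y = 6 * (x / (x^2 + y^2)) + 13"
  using assms by (simp add: psi_u_num_def psi_u_den_def field_simps)

lemma eval2_psi_v:
  assumes "x \<noteq> 0" and "x^2 + y^2 \<noteq> 0"
  shows "eval2 psi_v_num x y / eval2 psi_v_den x y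
    = 6 * (- y / (x^2 + y^2)) * quad_W (x / (x^2 + y^2)) / (x / (x^2 + y^2))"
proof -
  define s where "s = x^2 + y^2"
  have "s \<noteq> 0"
    using assms by (simp add: s_def)
  have "eval2 psi_v_num x y = - 6 * y * (2 * x^2 + 9 * x * s + 6 * s^2)"
      "eval2 psi_v_den x y = x * s^2"
    by (simp_all add: psi_v_num_def psi_v_den_def psi_u_den_def s_def)
  then show ?thesis
    using \<open>s \<noteq> 0\<close> \<open>x \<noteq> 0\<close> unfolding s_def[symmetric]
    by (simp only:) (simp add: quad_W_def field_simps power2_eq_square)
qed

lemma onE_phi_undefined:
  assumes E: "onE u v" and g: "u^2 + u - 74 \<noteq> 0" and u13: "u \<noteq> 13"
    and K: "(phiX u)^2 + (phiY u v)^2 = 0"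
  shows "u^2 + 10 * u - 83 = 0"
proof -
  define X where "X = phiX u"
  have "X \<noteq> 0"
    using u13 by (simp add: X_def phiX_def)
  have "quad_W X \<noteq> 0"
    using g by (simp add: phi_denominator_eq X_def)
  then have "inverted_F3 X (phiY u v) = 0"
    using inverted_F3_phi[OF E] by (simp add: X_def)
  moreover have "(phiY u v)^2 = -(X^2)"
    using K by (simp add: X_def eq_neg_iff_add_eq_0 add.commute)
  ultimately have "3 * X^2 * (X + 2) + X^2 * quad_W X = 0"
    unfolding inverted_F3_def by simp
  then have "X^2 * (2 * X^2 + 12 * X + 12) = 0"
    by (simp add: quad_W_def algebra_simps power2_eq_square)
  then have "2 * X^2 + 12 * X + 12 = 0"
    using \<open>X \<noteq> 0\<close> by simp
  moreover have "u = 6 * X + 13"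
    by (simp add: X_def affine_of_phiX)
  then have "u^2 + 10 * u - 83 = 18 * (2 * X^2 + 12 * X + 12)"
    by (simp add: power2_eq_square algebra_simps)
  ultimately show ?thesis
    by simp
qed

lemma phi_maps_E_to_C3:
  assumes E: "onE u v" and g: "u^2 + u - 74 \<noteq> 0" and u13: "u \<noteq> 13"
    and h: "u^2 + 10 * u - 83 \<noteq> 0"
  shows "phi_defined u v
    \<and> eval2 F3 (fst (phi u v)) (snd (phi u v)) = 0
    \<and> eval2 psi_u_den (fst (phi u v)) (snd (phi u v)) \<noteq> 0
    \<and> eval2 psi_v_den (fst (phi u v)) (snd (phi u v)) \<noteq> 0
    \<and> eval2 psi_u_num (fst (phi u v)) (snd (phi u v))
        / eval2 psi_u_den (fst (phi u v)) (snd (phi u v)) = u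
    \<and> eval2 psi_v_num (fst (phi u v)) (snd (phi u v))
        / eval2 psi_v_den (fst (phi u v)) (snd (phi u v)) = v"
proof -
  have K: "(phiX u)^2 + (phiY u v)^2 \<noteq> 0"
    using onE_phi_undefined[OF E g u13] h by blast
  define X where "X = phiX u"
  define Y where "Y = phiY u v"
  define x where "x = X / (X^2 + Y^2)"
  define y where "y = - Y / (X^2 + Y^2)"
  have K': "X^2 + Y^2 \<noteq> 0"
    using K by (simp add: X_def Y_def)
  have W: "quad_W X \<noteq> 0"
    using g by (simp add: phi_denominator_eq X_def)
  have "X \<noteq> 0"
    using u13 by (simp add: X_def phiX_def)
  have s: "x^2 + y^2 = 1 / (X^2 + Y^2)"
    using inversion_sum_squares[OF K'] by (simp add: x_def y_def power_divide)
  then have s0: "x^2 + y^2 \<noteq> 0" and x0: "x \<noteq> 0"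
    using K' \<open>X \<noteq> 0\<close> by (simp_all add: x_def)
  have X: "x / (x^2 + y^2) = X" and Y: "- y / (x^2 + y^2) = Y"
    using K' unfolding s by (simp_all add: x_def y_def)
  have "eval2 F3 x y = 0"
    using inverted_F3_phi[OF E] W unfolding eval2_F3_inversion[OF s0] X Y X_def Y_def by simp
  moreover have "eval2 psi_u_num x y / eval2 psi_u_den x y = u"
    by (simp add: eval2_psi_u[OF s0] X X_def affine_of_phiX)
  moreover have "eval2 psi_v_num x y / eval2 psi_v_den x y = v"
    using W \<open>X \<noteq> 0\<close> unfolding eval2_psi_v[OF x0 s0] X Y X_def Y_def by (simp add: phiY_eq)
  moreover have "eval2 psi_u_den x y \<noteq> 0" "eval2 psi_v_den x y \<noteq> 0"
    using s0 x0 by (simp_all add: psi_u_den_def psi_v_den_def)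
  moreover have "phi u v = (x, y)"
    by (simp add: phi_def x_def y_def X_def Y_def)
  moreover have "phi_defined u v"
    using g K by (simp add: phi_defined_def)
  ultimately show ?thesis
    by simp
qed

lemma psi_maps_C3_to_E:
  assumes F: "eval2 F3 x y = 0" and nz: "(x, y) \<noteq> (0, 0)"
  shows "eval2 psi_u_den x y \<noteq> 0 \<and> eval2 psi_v_den x y \<noteq> 0
    \<and> onE (eval2 psi_u_num x y / eval2 psi_u_den x y) (eval2 psi_v_num x y / eval2 psi_v_den x y)
    \<and> phi_defined (eval2 psi_u_num x y / eval2 psi_u_den x y)
        (eval2 psi_v_num x y / eval2 psi_v_den x y)
    \<and> phi (eval2 psi_u_num x y / eval2 psi_u_den x y)
        (eval2 psi_v_num x y / eval2 psi_v_den x y) = (x, y)"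
proof -
  have s0: "x^2 + y^2 \<noteq> 0"
  proof
    assume "x^2 + y^2 = 0"
    then have "eval2 F3 x y = 2 * x^4"
      unfolding eval2_F3 by algebra
    then have "x = 0" "y^2 = 0"
      using F \<open>x^2 + y^2 = 0\<close> by simp_all
    then show False
      using nz by simp
  qed
  have x0: "x \<noteq> 0"
  proof
    assume "x = 0"
    then have "y^6 = 0"
      using F by (simp add: eval2_F3 power2_eq_square)
    then show False
      using nz \<open>x = 0\<close> by simp
  qed
  define X where "X = x / (x^2 + y^2)"
  define Y where "Y = - y / (x^2 + y^2)"
  have "X \<noteq> 0"
    using x0 s0 by (simp add: X_def)
  have G: "inverted_F3 X Y = 0"
    using F s0 by (simp add: eval2_F3_inversion X_def Y_def)
  have W: "quad_W X \<noteq> 0"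
  proof
    assume "quad_W X = 0"
    then have "X = -2"
      using G \<open>X \<noteq> 0\<close> by (simp add: inverted_F3_def eq_neg_iff_add_eq_0)
    then show False
      using \<open>quad_W X = 0\<close> by (simp add: quad_W_def)
  qed
  define u where "u = 6 * X + 13"
  define v where "v = 6 * Y * quad_W X / X"
  have uv: "eval2 psi_u_num x y / eval2 psi_u_den x y = u"
      "eval2 psi_v_num x y / eval2 psi_v_den x y = v"
    by (simp_all add: eval2_psi_u[OF s0] eval2_psi_v[OF x0 s0] u_def v_def X_def Y_def)
  have "phiX u = X" "phiY u v = Y"
    using W \<open>X \<noteq> 0\<close> by (simp_all add: u_def v_def phiX_of_affine phiY_eq)
  moreover have "X^2 + Y^2 = 1 / (x^2 + y^2)"
    using inversion_sum_squares[OF s0] by (simp add: X_def Y_def power_divide)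
  ultimately have "phi_defined u v" "phi u v = (x, y)"
    using W s0 by (simp_all add: phi_defined_def phi_denominator_eq phi_def X_def Y_def)
  moreover have "onE u v"
    unfolding u_def v_def using \<open>X \<noteq> 0\<close> W G by (rule onE_inverted_F3)
  moreover have "eval2 psi_u_den x y \<noteq> 0" "eval2 psi_v_den x y \<noteq> 0"
    using s0 x0 by (simp_all add: psi_u_den_def psi_v_den_def)
  ultimately show ?thesis
    by (simp add: uv)
qed

lemma finite_onE_except:
  assumes "\<And>u v. onE u v \<Longrightarrow> u^2 + u - 74 \<noteq> 0 \<Longrightarrow> u \<noteq> 13 \<Longrightarrow> u^2 + 10 * u - 83 \<noteq> 0
    \<Longrightarrow> Q u v"
  shows "finite {(u, v). onE u v \<and> \<not> Q u v}"
proof (rule finite_subset)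
  define P :: "complex poly" where "P = [:-74, 1, 1:] * [:-13, 1:] * [:-83, 10, 1:]"
  have "poly P u = (u^2 + u - 74) * (u - 13) * (u^2 + 10 * u - 83)" for u
    by (simp add: P_def power2_eq_square algebra_simps)
  then show "{(u, v). onE u v \<and> \<not> Q u v} \<subseteq> {(u, v). poly P u = 0 \<and> v^2 = u^3 - 75 * u + 74}"
    using assms by (auto simp: onE_def)
  show "finite {(u, v). poly P u = 0 \<and> v^2 = u^3 - 75 * u + 74}"
    by (rule finite_roots_with_square_roots) (simp add: P_def)
qed

theorem mainTheorem1:
  shows "irreducible F3
    \<and> weierstrass_disc (-75) 74 \<noteq> 0
    \<and> (\<exists>N1 D1 N2 D2 :: rat poly poly.
         finite {(u, v). onE u v \<and>
            \<not> (phi_defined u v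
                \<and> eval2 F3 (fst (phi u v)) (snd (phi u v)) = 0
                \<and> eval2 D1 (fst (phi u v)) (snd (phi u v)) \<noteq> 0
                \<and> eval2 D2 (fst (phi u v)) (snd (phi u v)) \<noteq> 0
                \<and> eval2 N1 (fst (phi u v)) (snd (phi u v))
                    / eval2 D1 (fst (phi u v)) (snd (phi u v)) = u
                \<and> eval2 N2 (fst (phi u v)) (snd (phi u v))
                    / eval2 D2 (fst (phi u v)) (snd (phi u v)) = v)}
       \<and> finite {(x, y). eval2 F3 x y = 0 \<and>
            \<not> (eval2 D1 x y \<noteq> 0 \<and> eval2 D2 x y \<noteq> 0
                \<and> onE (eval2 N1 x y / eval2 D1 x y) (eval2 N2 x y / eval2 D2 x y)
                \<and> phi_defined (eval2 N1 x y / eval2 D1 x y) (eval2 N2 x y / eval2 D2 x y)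
                \<and> phi (eval2 N1 x y / eval2 D1 x y) (eval2 N2 x y / eval2 D2 x y) = (x, y))})
    \<and> eval2 F3 (- 1 / 2) 0 = 0
    \<and> weierstrass_j (-75) 74 = 62500 / 33"
proof (intro conjI)
  show "irreducible F3"
    by (rule irreducible_F3)
  show "weierstrass_disc (-75) 74 \<noteq> 0" "weierstrass_j (-75) 74 = 62500 / 33"
    by (simp_all add: weierstrass_disc_def weierstrass_j_def)
  show "eval2 F3 (- 1 / 2) 0 = 0"
    by (simp add: eval2_F3 power_divide)
  (* the witnesses N1, D1, N2, D2 are the psi polynomials, found by unification *)
qed (intro exI conjI; rule finite_onE_except finite_except_point;
    rule phi_maps_E_to_C3 psi_maps_C3_to_E; assumption)

end
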